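(* Let $(c_n)_{n\in\mathbb{N}}$ be positive numbers with $\lim_{n\to\infty}c_n/n=\infty$, and let $(A_n)_{n\in\mathbb{N}}\subset\mathbb{N}$ satisfy $\lim_{n\to\infty}c_n^{-1}\log A_n=a$ for some $a>0$. Then for every $T>0$ and every sequence $(k_n)_{n\in\mathbb{N}}\subset\mathbb{N}_0$, $$\lim_{n\to\infty}\sup_{0\le t\le T}\Big|\frac1{c_n}\log^+\Big(\sum_{i=1}^{A_n}X_{i,k_n}([nt])\Big)-a\Big|=0\quad\text{a.s.}$$
   Context: $(X_{i,k})_{i\in\mathbb{N},k\in\mathbb{N}_0}$ are i.i.d. Galton–Watson processes $X_{i,k}=(X_{i,k}(n))_{n\in\mathbb{N}_0}$ with $X_{i,k}(0)=1$ and offspring mean $\mu\in(0,\infty)$. $\log^+x=\max(\log x,0)$, $[\cdot]$ is the integer part. *)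

theory Defs
  imports "HOL-Probability.Probability"
begin

definition logplus :: "real \<Rightarrow> real" where
  "logplus x = (if x \<le> 1 then 0 else ln x)"

text \<open>Galton-Watson processes built from offspring variables: the process with
  index (i,k) starts with one individual, and generation n+1 is the sum of the
  offspring numbers xi i k n j of the individuals j of generation n.\<close>
fun gw :: "(nat \<Rightarrow> nat \<Rightarrow> nat \<Rightarrow> nat \<Rightarrow> 'a \<Rightarrow> nat) \<Rightarrow> nat \<Rightarrow> nat \<Rightarrow> nat \<Rightarrow> 'a \<Rightarrow> nat" where
  "gw \<xi> i k 0 \<omega> = 1"
| "gw \<xi> i k (Suc n) \<omega> = (\<Sum>j<gw \<xi> i k n \<omega>. \<xi> i k n j \<omega>)"

end

theory Submission
  imports Defs
begin

text \<open>
  Let \<open>S n m\<close> be the sum of the first \<open>A n\<close> processes at generation \<open>m\<close> and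
  \<open>L n = [n T]\<close>. Upper bound: \<open>E (S n m) = A n \<mu>^m\<close>, so by Markov's inequality and a
  union bound over \<open>m \<le> L n\<close>, some \<open>S n m\<close> exceeds \<open>exp ((a + \<epsilon>) c n)\<close> with probability
  at most \<open>(L n + 1) A n max 1 \<mu> ^ L n exp (- (a + \<epsilon>) c n)\<close>, which is summable in \<open>n\<close>
  because \<open>c n / n \<rightarrow> \<infinity>\<close>. Lower bound: a process is still alive at generation \<open>L n\<close> if
  individual \<open>0\<close> of each of its first \<open>L n\<close> generations has a child. These events are
  independent across processes and have probability \<open>\<pi> ^ L n\<close>, where \<open>\<pi> = P (\<xi> \<ge> 1) > 0\<close> since \<open>\<mu> > 0\<close>; by
  Chebyshev's inequality at least \<open>A n \<pi> ^ L n / 2 \<ge> exp ((a - \<epsilon>) c n)\<close> of them occur,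
  again outside events of summable probability. Borel--Cantelli and \<open>\<epsilon> \<rightarrow> 0\<close> conclude.
\<close>

lemma (in prob_space) AE_eventually_notin_of_exp_bound:
  assumes [measurable]: "\<And>n. D n \<in> events"
    and bound: "eventually (\<lambda>n. prob (D n) \<le> C * exp (- real n)) sequentially"
  shows "AE \<omega> in M. eventually (\<lambda>n. \<omega> \<notin> D n) sequentially"
proof -
  have "summable (\<lambda>n. C * exp (-1) ^ n :: real)"
    by (intro summable_mult summable_geometric) simp
  moreover have "exp (- real n) = exp (-1) ^ n" for n
    using exp_of_nat_mult[of n "-1::real"] by simp
  ultimately have "summable (\<lambda>n. C * exp (- real n))"
    by simp
  moreover have "eventually (\<lambda>n. norm (prob (D n)) \<le> C * exp (- real n)) sequentially"
    using bound by simp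
  ultimately have "summable (\<lambda>n. prob (D n))"
    by (rule summable_comparison_test_ev[rotated])
  then have "AE \<omega> in M. eventually (\<lambda>n. \<omega> \<in> space M - D n) sequentially"
    by (intro borel_cantelli_AE1) (auto simp: less_top[symmetric])
  then show ?thesis
    by (rule eventually_mono) (auto elim: eventually_mono)
qed

lemma (in prob_space) prob_sum_indicator_less_half_mean:
  fixes E :: "'i \<Rightarrow> 'a set" and q :: real
  assumes fin: "finite I" and ev[measurable]: "\<And>i. i \<in> I \<Longrightarrow> E i \<in> events"
    and prob_E: "\<And>i. i \<in> I \<Longrightarrow> prob (E i) = q"
    and prob_Int: "\<And>i i'. i \<in> I \<Longrightarrow> i' \<in> I \<Longrightarrow> i \<noteq> i' \<Longrightarrow> prob (E i \<inter> E i') = q\<^sup>2"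
    and pos: "real (card I) * q > 0"
  shows "prob {\<omega>\<in>space M. (\<Sum>i\<in>I. indicator (E i) \<omega> :: real) < real (card I) * q / 2}
    \<le> 4 / (real (card I) * q)"
proof -
  define Y where "Y = (\<lambda>\<omega>. \<Sum>i\<in>I. indicator (E i) \<omega> :: real)"
  define n where "n = real (card I)"
  have int_Int: "integrable M (indicator (E i \<inter> E i') :: 'a \<Rightarrow> real)"
    if "i \<in> I" "i' \<in> I" for i i'
    using that by (intro integrable_real_indicator) (auto simp: less_top[symmetric])
  have Y_sq: "(Y \<omega>)\<^sup>2 = (\<Sum>i\<in>I. \<Sum>i'\<in>I. indicator (E i \<inter> E i') \<omega>)" for \<omega>
    unfolding Y_def power2_eq_square sum_product by (simp add: indicator_inter_arith)
  have int_Y: "integrable M Y"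
    using int_Int[of i i for i] unfolding Y_def by simp
  have int_Y_sq: "integrable M (\<lambda>\<omega>. (Y \<omega>)\<^sup>2)"
    unfolding Y_sq using int_Int by simp
  have exp_Y: "expectation Y = n * q"
    using int_Int[of i i for i] prob_E by (simp add: Y_def n_def Bochner_Integration.integral_sum)
  have "expectation (\<lambda>\<omega>. (Y \<omega>)\<^sup>2) = (\<Sum>i\<in>I. \<Sum>i'\<in>I. prob (E i \<inter> E i'))"
    unfolding Y_sq using int_Int by (simp add: Bochner_Integration.integral_sum)
  also have "\<dots> = (\<Sum>i\<in>I. \<Sum>i'\<in>I. q\<^sup>2 + (if i = i' then q - q\<^sup>2 else 0))"
    using prob_E prob_Int by (intro sum.cong) auto
  also have "\<dots> = (\<Sum>i\<in>I. n * q\<^sup>2 + (q - q\<^sup>2))"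
    using fin by (intro sum.cong refl) (simp add: sum.distrib sum.delta' n_def)
  also have "\<dots> = n * n * q\<^sup>2 + n * (q - q\<^sup>2)"
    by (simp add: n_def algebra_simps)
  finally have "variance Y = n * q - n * q\<^sup>2"
    using variance_eq[OF int_Y int_Y_sq] exp_Y by (simp add: algebra_simps power2_eq_square)
  then have var: "variance Y \<le> n * q"
    by (simp add: n_def)
  have "prob {\<omega>\<in>space M. Y \<omega> < n * q / 2}
      \<le> prob {\<omega>\<in>space M. n * q / 2 \<le> \<bar>Y \<omega> - expectation Y\<bar>}"
    using exp_Y by (intro finite_measure_mono) (auto simp: Y_def abs_if)
  also have "\<dots> \<le> variance Y / (n * q / 2)\<^sup>2"
    using pos int_Y_sq by (intro Chebyshev_inequality) (auto simp: Y_def n_def)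
  also have "\<dots> \<le> n * q / (n * q / 2)\<^sup>2"
    using var by (intro divide_right_mono) auto
  also have "\<dots> = 4 / (n * q)"
    using pos by (simp add: n_def power2_eq_square field_simps)
  finally show ?thesis
    by (simp add: Y_def n_def)
qed

lemma AE_all_pos:
  assumes AE: "\<And>\<epsilon>::real. 0 < \<epsilon> \<Longrightarrow> AE x in M. P \<epsilon> x"
    and mono: "\<And>\<epsilon> \<epsilon>' x. \<epsilon> \<le> \<epsilon>' \<Longrightarrow> P \<epsilon> x \<Longrightarrow> P \<epsilon>' x"
  shows "AE x in M. \<forall>\<epsilon>>0. P \<epsilon> x"
proof -
  have "AE x in M. \<forall>j::nat. P (inverse (Suc j)) x"
    by (subst AE_all_countable) (simp add: AE)
  then show ?thesis
  proof (rule eventually_mono, intro allI impI)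
    fix x and \<epsilon> :: real
    assume P: "\<forall>j::nat. P (inverse (Suc j)) x" and "0 < \<epsilon>"
    then obtain j where "0 < j" "inverse (real j) < \<epsilon>"
      using ex_inverse_of_nat_less by blast
    then show "P \<epsilon> x"
      using P[rule_format, of "j - 1"] mono[OF less_imp_le] by simp
  qed
qed

lemma tendsto_SUP_zero:
  fixes g :: "nat \<Rightarrow> 'b \<Rightarrow> real"
  assumes "t\<^sub>0 \<in> S"
    and nonneg: "\<And>n t. t \<in> S \<Longrightarrow> 0 \<le> g n t"
    and bdd: "\<And>n. bdd_above (g n ` S)"
    and small: "\<And>\<epsilon>. 0 < \<epsilon> \<Longrightarrow> eventually (\<lambda>n. \<forall>t\<in>S. g n t \<le> \<epsilon>) sequentially"
  shows "(\<lambda>n. SUP t\<in>S. g n t) \<longlonglongrightarrow> 0"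
proof (rule order_tendstoI)
  fix y :: real
  assume "y < 0"
  moreover have "g n t\<^sub>0 \<le> (SUP t\<in>S. g n t)" for n
    using \<open>t\<^sub>0 \<in> S\<close> bdd by (rule cSUP_upper)
  ultimately show "eventually (\<lambda>n. y < (SUP t\<in>S. g n t)) sequentially"
    using nonneg[OF \<open>t\<^sub>0 \<in> S\<close>] by (intro always_eventually allI) (smt (verit))
next
  fix e :: real
  assume "0 < e"
  then have "eventually (\<lambda>n. \<forall>t\<in>S. g n t \<le> e / 2) sequentially"
    by (intro small) simp
  then show "eventually (\<lambda>n. (SUP t\<in>S. g n t) < e) sequentially"
  proof (rule eventually_mono)
    fix n
    assume "\<forall>t\<in>S. g n t \<le> e / 2"
    then have "(SUP t\<in>S. g n t) \<le> e / 2"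
      using \<open>t\<^sub>0 \<in> S\<close> by (intro cSUP_least) auto
    then show "(SUP t\<in>S. g n t) < e"
      using \<open>0 < e\<close> by simp
  qed
qed

lemma abs_logplus_div_sub_le:
  fixes c a \<epsilon> s :: real
  assumes "0 < c" "\<epsilon> < a"
    and lower: "exp ((a - \<epsilon>) * c) \<le> s" and upper: "s \<le> exp ((a + \<epsilon>) * c)"
  shows "\<bar>logplus s / c - a\<bar> \<le> \<epsilon>"
proof -
  have "1 < s"
    using assms by (smt (verit) one_less_exp_iff zero_less_mult_iff)
  then have "logplus s = ln s" and "(a - \<epsilon>) * c \<le> ln s" and "ln s \<le> (a + \<epsilon>) * c"
    using lower upper ln_le_cancel_iff[of s "exp ((a + \<epsilon>) * c)"]
    by (simp_all add: logplus_def ln_ge_iff)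
  moreover have "a - \<epsilon> \<le> ln s / c \<longleftrightarrow> (a - \<epsilon>) * c \<le> ln s"
    and "ln s / c \<le> a + \<epsilon> \<longleftrightarrow> ln s \<le> (a + \<epsilon>) * c"
    using \<open>0 < c\<close> by (simp_all add: pos_le_divide_eq pos_divide_le_eq)
  ultimately show ?thesis
    by (simp add: abs_le_iff)
qed

section \<open>Galton--Watson processes with i.i.d. offspring numbers\<close>

lemma gw_cong:
  assumes "\<And>i' k' g j. g < m \<Longrightarrow> \<xi> i' k' g j \<omega> = \<xi>' i' k' g j \<omega>'"
  shows "gw \<xi> i k m \<omega> = gw \<xi>' i k m \<omega>'"
  using assms by (induction m) auto

lemma measurable_gw:
  assumes "\<And>i' k' g j. g < m \<Longrightarrow> \<xi> i' k' g j \<in> measurable N (count_space UNIV)"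
  shows "gw \<xi> i k m \<in> measurable N (count_space UNIV)"
  using assms
proof (induction m)
  case 0
  have "gw \<xi> i k 0 = (\<lambda>_. 1)"
    by auto
  then show ?case
    by simp
next
  case (Suc m)
  then have IH: "gw \<xi> i k m \<in> measurable N (count_space UNIV)"
    by simp
  have "(\<lambda>\<omega>. (\<lambda>v \<omega>. \<Sum>j<v. \<xi> i k m j \<omega>) (gw \<xi> i k m \<omega>) \<omega>) \<in> measurable N (count_space UNIV)"
    by (rule measurable_compose_countable[OF _ IH], rule measurable_sum_nat) (simp add: Suc.prems)
  then show ?case
    by simp
qed

locale galton_watson_family = prob_space M for M :: "'a measure" +
  fixes p :: "nat pmf" and \<mu> :: real and \<xi> :: "nat \<Rightarrow> nat \<Rightarrow> nat \<Rightarrow> nat \<Rightarrow> 'a \<Rightarrow> nat"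
  assumes indep: "indep_vars (\<lambda>_. count_space UNIV)
                  (\<lambda>(i, k, n, j). \<xi> i k n j) (UNIV :: (nat \<times> nat \<times> nat \<times> nat) set)"
    and distr: "\<And>i k n j. distr M (count_space UNIV) (\<xi> i k n j) = measure_pmf p"
    and mean_int: "integrable (measure_pmf p) real"
    and mean: "measure_pmf.expectation p real = \<mu>"
begin

lemma measurable_offspring[measurable]: "\<xi> i k n j \<in> measurable M (count_space UNIV)"
  using indep unfolding indep_vars_def by (metis (no_types, lifting) UNIV_I case_prod_conv)

lemma measurable_gw_family[measurable]: "gw \<xi> i k m \<in> measurable M (count_space UNIV)"
  by (rule measurable_gw) simp

lemma prob_offspring: "prob (\<xi> i k n j -` B \<inter> space M) = measure_pmf.prob p B"
  using measure_distr[of "\<xi> i k n j" M "count_space UNIV" B] distr by simp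

lemma integrable_offspring: "integrable M (\<lambda>\<omega>. real (\<xi> i k n j \<omega>))"
  using distr[of i k n j] mean_int integrable_distr_eq[of "\<xi> i k n j" M "count_space UNIV" real]
  by simp

lemma expectation_offspring: "expectation (\<lambda>\<omega>. real (\<xi> i k n j \<omega>)) = \<mu>"
  using distr[of i k n j] mean integral_distr[of "\<xi> i k n j" M "count_space UNIV" real] by simp

lemma mean_nonneg: "0 \<le> \<mu>"
  using expectation_offspring[of 0 0 0 0, symmetric] by simp

lemma offspring_pos_prob_pos:
  assumes "0 < \<mu>"
  shows "0 < measure_pmf.prob p {1..}"
proof (rule ccontr)
  assume "\<not> 0 < measure_pmf.prob p {1..}"
  then have "set_pmf p \<inter> {1..} = {}"
    by (simp add: measure_pmf_zero_iff[symmetric] order_less_le)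
  then have "AE x in measure_pmf p. real x = 0"
    by (auto simp: AE_measure_pmf_iff)
  then have "measure_pmf.expectation p real = measure_pmf.expectation p (\<lambda>_. 0)"
    by (intro integral_cong_AE) auto
  then have "\<mu> = 0"
    using mean by simp
  with assms show False
    by simp
qed

text \<open>The offspring numbers of generation \<open>m\<close> are independent of the generation size
  \<open>gw \<xi> i k m\<close>, which only depends on the earlier generations.\<close>
lemma indep_var_offspring_gw:
  "indep_var (count_space UNIV) (\<xi> i k m j) (count_space UNIV) (gw \<xi> i k m)"
proof -
  define I where "I = {(i, k, m, j)}"
  define \<Xi> where "\<Xi> = (\<lambda>(i, k, n, j). \<xi> i k n j)"
  have "indep_var (PiM I (\<lambda>_. count_space UNIV)) (\<lambda>\<omega>. restrict (\<lambda>x. \<Xi> x \<omega>) I)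
     (PiM (- I) (\<lambda>_. count_space UNIV)) (\<lambda>\<omega>. restrict (\<lambda>x. \<Xi> x \<omega>) (- I))"
    by (rule indep_var_restrict[OF indep[folded \<Xi>_def]]) auto
  then have "indep_var (count_space UNIV) ((\<lambda>f. f (i, k, m, j)) \<circ> (\<lambda>\<omega>. restrict (\<lambda>x. \<Xi> x \<omega>) I))
      (count_space UNIV)
      ((\<lambda>f. gw (\<lambda>i k n j f. f (i, k, n, j)) i k m f) \<circ> (\<lambda>\<omega>. restrict (\<lambda>x. \<Xi> x \<omega>) (- I)))"
    by (rule indep_var_compose)
      (auto simp: I_def intro!: measurable_gw measurable_component_singleton)
  moreover have "(\<lambda>f. f (i, k, m, j)) \<circ> (\<lambda>\<omega>. restrict (\<lambda>x. \<Xi> x \<omega>) I) = \<xi> i k m j"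
    by (auto simp: I_def \<Xi>_def)
  moreover have "(\<lambda>f. gw (\<lambda>i k n j f. f (i, k, n, j)) i k m f) \<circ> (\<lambda>\<omega>. restrict (\<lambda>x. \<Xi> x \<omega>) (- I))
      = gw \<xi> i k m"
    by (rule ext, simp, rule sym, rule gw_cong) (auto simp: I_def \<Xi>_def)
  ultimately show ?thesis
    by simp
qed

lemma nn_integral_offspring_times_alive:
  "(\<integral>\<^sup>+\<omega>. ennreal (real (\<xi> i k m j \<omega>) * of_bool (j < gw \<xi> i k m \<omega>)) \<partial>M)
   = ennreal \<mu> * emeasure M {\<omega>\<in>space M. j < gw \<xi> i k m \<omega>}"
proof -
  let ?Y = "\<lambda>\<omega>. of_bool (j < gw \<xi> i k m \<omega>) :: real"
  have ind: "indep_var borel (real \<circ> \<xi> i k m j) borel ((\<lambda>v. of_bool (j < v)) \<circ> gw \<xi> i k m)"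
    by (rule indep_var_compose[OF indep_var_offspring_gw]) auto
  have int_Y: "integrable M ?Y"
    by (rule integrable_const_bound[where B = 1]) auto
  have int: "integrable M (\<lambda>\<omega>. real (\<xi> i k m j \<omega>) * ?Y \<omega>)"
    using indep_var_integrable[OF ind] integrable_offspring int_Y by (simp add: comp_def)
  have "expectation ?Y = expectation (indicator {\<omega>\<in>space M. j < gw \<xi> i k m \<omega>})"
    by (intro Bochner_Integration.integral_cong) (auto simp: indicator_def)
  then have "expectation ?Y = prob {\<omega>\<in>space M. j < gw \<xi> i k m \<omega>}"
    by simp
  then have "(\<integral>\<omega>. real (\<xi> i k m j \<omega>) * ?Y \<omega> \<partial>M) = \<mu> * prob {\<omega>\<in>space M. j < gw \<xi> i k m \<omega>}"
    using indep_var_lebesgue_integral[OF ind] integrable_offspring int_Y expectation_offspring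
    by (simp add: comp_def)
  then show ?thesis
    using nn_integral_eq_integral[OF int] mean_nonneg
    by (simp add: ennreal_mult emeasure_eq_measure)
qed

text \<open>Wald's identity \<open>E X(m+1) = \<mu> E X(m)\<close>, iterated.\<close>
lemma nn_integral_gw: "(\<integral>\<^sup>+\<omega>. ennreal (real (gw \<xi> i k m \<omega>)) \<partial>M) = ennreal (\<mu> ^ m)"
proof (induction m)
  case 0
  then show ?case
    by (simp add: emeasure_space_1)
next
  case (Suc m)
  have gw_Suc: "ennreal (real (gw \<xi> i k (Suc m) \<omega>))
      = (\<Sum>j. ennreal (real (\<xi> i k m j \<omega>) * of_bool (j < gw \<xi> i k m \<omega>)))" for \<omega>
    by (subst suminf_finite[where N = "{..<gw \<xi> i k m \<omega>}"]) (auto intro!: sum.cong)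
  have alive: "(\<Sum>j. emeasure M {\<omega>\<in>space M. j < gw \<xi> i k m \<omega>})
      = (\<integral>\<^sup>+\<omega>. ennreal (real (gw \<xi> i k m \<omega>)) \<partial>M)"
  proof -
    have "(\<Sum>j. ennreal (of_bool (j < v))) = ennreal (real v)" for v
      by (subst suminf_finite[where N = "{..<v}"]) (auto simp: ennreal_of_nat_eq_real_of_nat)
    moreover have "emeasure M {\<omega>\<in>space M. j < gw \<xi> i k m \<omega>}
        = (\<integral>\<^sup>+\<omega>. ennreal (of_bool (j < gw \<xi> i k m \<omega>)) \<partial>M)" for j
    proof -
      have "(\<integral>\<^sup>+\<omega>. ennreal (of_bool (j < gw \<xi> i k m \<omega>)) \<partial>M)
          = (\<integral>\<^sup>+\<omega>. indicator {\<omega>\<in>space M. j < gw \<xi> i k m \<omega>} \<omega> \<partial>M)"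
        by (intro nn_integral_cong) (simp add: indicator_def)
      then show ?thesis
        by simp
    qed
    ultimately show ?thesis
      by (simp add: nn_integral_suminf[symmetric])
  qed
  have "(\<integral>\<^sup>+\<omega>. ennreal (real (gw \<xi> i k (Suc m) \<omega>)) \<partial>M)
      = (\<Sum>j. \<integral>\<^sup>+\<omega>. ennreal (real (\<xi> i k m j \<omega>) * of_bool (j < gw \<xi> i k m \<omega>)) \<partial>M)"
    unfolding gw_Suc by (rule nn_integral_suminf) measurable
  also have "\<dots> = ennreal \<mu> * (\<integral>\<^sup>+\<omega>. ennreal (real (gw \<xi> i k m \<omega>)) \<partial>M)"
    by (simp add: nn_integral_offspring_times_alive alive[symmetric])
  finally show ?case
    using Suc mean_nonneg by (simp add: ennreal_mult)
qed

lemma integrable_gw: "integrable M (\<lambda>\<omega>. real (gw \<xi> i k m \<omega>))"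
  by (rule integrableI_nn_integral_finite[OF _ _ nn_integral_gw]) auto

lemma expectation_gw: "expectation (\<lambda>\<omega>. real (gw \<xi> i k m \<omega>)) = \<mu> ^ m"
  using nn_integral_eq_integral[OF integrable_gw] nn_integral_gw mean_nonneg
  by (simp add: ennreal_inj)

lemma prob_sum_gw_greater:
  assumes "finite I" "0 < B"
  shows "prob {\<omega>\<in>space M. B < real (\<Sum>i\<in>I. gw \<xi> i k m \<omega>)} \<le> real (card I) * \<mu> ^ m / B"
proof -
  have "prob {\<omega>\<in>space M. B < real (\<Sum>i\<in>I. gw \<xi> i k m \<omega>)}
      \<le> prob {\<omega>\<in>space M. B \<le> real (\<Sum>i\<in>I. gw \<xi> i k m \<omega>)}"
    by (intro finite_measure_mono) auto
  also have "\<dots> \<le> expectation (\<lambda>\<omega>. real (\<Sum>i\<in>I. gw \<xi> i k m \<omega>)) / B"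
    using assms integrable_gw
    by (intro integral_Markov_inequality_measure[where A = "space M"]) (auto intro!: sum_nonneg)
  also have "\<dots> = real (card I) * \<mu> ^ m / B"
    by (simp add: Bochner_Integration.integral_sum integrable_gw expectation_gw)
  finally show ?thesis .
qed

lemma prob_offspring_all_pos:
  assumes "finite J"
  shows "prob {\<omega>\<in>space M. \<forall>(i, k, n, j)\<in>J. 1 \<le> \<xi> i k n j \<omega>}
     = measure_pmf.prob p {1..} ^ card J"
proof (cases "J = {}")
  case False
  define \<Xi> where "\<Xi> = (\<lambda>(i, k, n, j). \<xi> i k n j)"
  have "{\<omega>\<in>space M. \<forall>(i, k, n, j)\<in>J. 1 \<le> \<xi> i k n j \<omega>} = (\<Inter>x\<in>J. \<Xi> x -` {1..} \<inter> space M)"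
    using False by (auto simp: \<Xi>_def)
  also have "prob \<dots> = (\<Prod>x\<in>J. prob (\<Xi> x -` {1..} \<inter> space M))"
    using False assms by (intro indep_varsD[OF indep[folded \<Xi>_def]]) auto
  also have "\<dots> = (\<Prod>x\<in>J. measure_pmf.prob p {1..})"
    by (intro prod.cong) (auto simp: \<Xi>_def prob_offspring)
  finally show ?thesis
    by simp
qed (simp add: prob_space)

text \<open>Individual \<open>0\<close> of each of the generations \<open>0, \<dots>, L - 1\<close> of process \<open>(i, k)\<close> has a
  child; this keeps the process alive up to generation \<open>L\<close>.\<close>
definition first_born_line :: "nat \<Rightarrow> nat \<Rightarrow> nat \<Rightarrow> 'a set" where
  "first_born_line i k L = {\<omega>\<in>space M. \<forall>g<L. 1 \<le> \<xi> i k g 0 \<omega>}"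

lemma first_born_line_sets[measurable]: "first_born_line i k L \<in> events"
  unfolding first_born_line_def by measurable

lemma gw_pos_of_first_born_line:
  assumes "\<omega> \<in> first_born_line i k L" "m \<le> L"
  shows "1 \<le> gw \<xi> i k m \<omega>"
  using assms(2)
proof (induction m)
  case (Suc m)
  then have "1 \<le> gw \<xi> i k m \<omega>" "1 \<le> \<xi> i k m 0 \<omega>"
    using assms(1) by (auto simp: first_born_line_def)
  moreover from this have "\<xi> i k m 0 \<omega> \<le> (\<Sum>j<gw \<xi> i k m \<omega>. \<xi> i k m j \<omega>)"
    by (intro member_le_sum) auto
  ultimately show ?case
    by simp
qed simp

lemma prob_first_born_line_Int:
  "prob (first_born_line i k L \<inter> first_born_line i' k L)
     = measure_pmf.prob p {1..} ^ (card {i, i'} * L)"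
proof -
  have eq: "first_born_line i k L \<inter> first_born_line i' k L
      = {\<omega>\<in>space M. \<forall>(i, k, n, j)\<in>{i, i'} \<times> {k} \<times> {..<L} \<times> {0}. 1 \<le> \<xi> i k n j \<omega>}"
    by (auto simp: first_born_line_def)
  show ?thesis
    unfolding eq using prob_offspring_all_pos[of "{i, i'} \<times> {k} \<times> {..<L} \<times> {0}"]
    by (simp add: card_cartesian_product)
qed

lemma prob_first_born_line: "prob (first_born_line i k L) = measure_pmf.prob p {1..} ^ L"
  using prob_first_born_line_Int[of i k L i] by simp

lemma prob_first_born_line_Int_distinct:
  "i \<noteq> i' \<Longrightarrow> prob (first_born_line i k L \<inter> first_born_line i' k L)
     = (measure_pmf.prob p {1..} ^ L)\<^sup>2"
  using prob_first_born_line_Int[of i k L i'] by (simp add: power2_eq_square power_add)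

end

section \<open>Growth of the sum of \<open>A\<^sub>n\<close> processes\<close>

locale galton_watson_growth = galton_watson_family M p \<mu> \<xi> for M :: "'a measure" and p \<mu> \<xi> +
  fixes c :: "nat \<Rightarrow> real" and A :: "nat \<Rightarrow> nat" and a T :: real and k :: "nat \<Rightarrow> nat"
  assumes mu_pos: "0 < \<mu>"
    and c_pos: "\<And>n. n \<ge> 1 \<Longrightarrow> c n > 0"
    and c_lim: "filterlim (\<lambda>n. c n / real n) at_top sequentially"
    and A_pos: "\<And>n. n \<ge> 1 \<Longrightarrow> A n \<ge> 1"
    and A_lim: "(\<lambda>n. ln (real (A n)) / c n) \<longlonglongrightarrow> a"
    and a_pos: "a > 0"
    and T_pos: "T > 0"
begin

definition L :: "nat \<Rightarrow> nat" where "L n = nat \<lfloor>real n * T\<rfloor>"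

definition S :: "nat \<Rightarrow> nat \<Rightarrow> 'a \<Rightarrow> nat" where
  "S n m \<omega> = (\<Sum>i\<in>{1..A n}. gw \<xi> i (k n) m \<omega>)"

lemma measurable_S[measurable]: "(\<lambda>\<omega>. real (S n m \<omega>)) \<in> borel_measurable M"
  unfolding S_def by measurable

lemma L_le: "real (L n) \<le> real n * T"
  unfolding L_def using T_pos by simp

lemma nat_floor_le_L: "0 \<le> t \<Longrightarrow> t \<le> T \<Longrightarrow> nat \<lfloor>real n * t\<rfloor> \<le> L n"
  unfolding L_def by (intro nat_mono floor_mono mult_left_mono) auto

lemma eventually_linear_le_c:
  assumes "0 < \<delta>"
  shows "eventually (\<lambda>n. K * real n \<le> \<delta> * c n) sequentially"
  using c_lim[unfolded filterlim_at_top, rule_format, of "K / \<delta>"] eventually_ge_at_top[of 1]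
proof eventually_elim
  case (elim n)
  then have "\<delta> * (K / \<delta> * real n) \<le> \<delta> * c n"
    using assms by (intro mult_left_mono) (simp_all add: pos_le_divide_eq)
  then show ?case
    using assms by simp
qed

lemma eventually_ln_A_linear_le:
  assumes "0 < \<delta>"
  shows "eventually (\<lambda>n. ln (real (A n)) + K * real n \<le> (a + \<delta>) * c n) sequentially"
proof -
  have "eventually (\<lambda>n. ln (real (A n)) / c n < a + \<delta> / 2) sequentially"
    using A_lim assms by (intro order_tendstoD) auto
  with eventually_ge_at_top[of 1] eventually_linear_le_c[OF half_gt_zero[OF assms], of K]
  show ?thesis
  proof eventually_elim
    case (elim n)
    have "0 < c n"
      using c_pos elim(1) by simp
    with elim(3) have "ln (real (A n)) \<le> (a + \<delta> / 2) * c n"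
      by (simp add: pos_divide_less_eq)
    with elim(2) show ?case
      by (simp add: algebra_simps)
  qed
qed

lemma eventually_linear_le_ln_A:
  assumes "0 < \<delta>"
  shows "eventually (\<lambda>n. (a - \<delta>) * c n + K * real n \<le> ln (real (A n))) sequentially"
proof -
  have "eventually (\<lambda>n. a - \<delta> / 2 < ln (real (A n)) / c n) sequentially"
    using A_lim assms by (intro order_tendstoD) auto
  with eventually_ge_at_top[of 1] eventually_linear_le_c[OF half_gt_zero[OF assms], of K]
  show ?thesis
  proof eventually_elim
    case (elim n)
    have "0 < c n"
      using c_pos elim(1) by simp
    with elim(3) have "(a - \<delta> / 2) * c n \<le> ln (real (A n))"
      by (simp add: pos_less_divide_eq)
    with elim(2) show ?case
      by (simp add: algebra_simps)
  qed
qed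

lemma prob_some_S_greater:
  assumes "0 < B"
  shows "prob (\<Union>m\<le>L n. {\<omega>\<in>space M. B < real (S n m \<omega>)})
    \<le> real (L n + 1) * real (A n) * max 1 \<mu> ^ L n / B"
proof -
  have "prob (\<Union>m\<le>L n. {\<omega>\<in>space M. B < real (S n m \<omega>)})
      \<le> (\<Sum>m\<le>L n. prob {\<omega>\<in>space M. B < real (S n m \<omega>)})"
    by (rule measure_UNION_le) auto
  also have "\<dots> \<le> (\<Sum>m\<le>L n. real (A n) * max 1 \<mu> ^ L n / B)"
  proof (rule sum_mono)
    fix m
    assume "m \<in> {..L n}"
    then have "\<mu> ^ m \<le> max 1 \<mu> ^ L n"
      using mean_nonneg by (meson atMost_iff le_max_iff_disj order.trans order_refl power_increasing power_mono)
    then have "real (A n) * \<mu> ^ m / B \<le> real (A n) * max 1 \<mu> ^ L n / B"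
      using assms by (simp add: divide_right_mono mult_left_mono)
    then show "prob {\<omega>\<in>space M. B < real (S n m \<omega>)} \<le> real (A n) * max 1 \<mu> ^ L n / B"
      using prob_sum_gw_greater[of "{1..A n}" B "k n" m] assms by (simp add: S_def)
  qed
  finally show ?thesis
    by simp
qed

lemma AE_eventually_S_le:
  assumes "0 < \<epsilon>"
  shows "AE \<omega> in M. eventually (\<lambda>n. \<forall>m\<le>L n. real (S n m \<omega>) \<le> exp ((a + \<epsilon>) * c n)) sequentially"
proof -
  define U where "U n = (\<Union>m\<le>L n. {\<omega>\<in>space M. exp ((a + \<epsilon>) * c n) < real (S n m \<omega>)})" for n
  define \<rho> where "\<rho> = max 1 \<mu>"
  have "1 \<le> \<rho>"
    by (simp add: \<rho>_def)
  have "eventually (\<lambda>n. prob (U n) \<le> 1 * exp (- real n)) sequentially"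
    using eventually_ge_at_top[of 1] eventually_ln_A_linear_le[OF assms, of "T + T * ln \<rho> + 1"]
  proof eventually_elim
    case (elim n)
    have "ln (real (L n + 1)) \<le> real n * T"
      using ln_add_one_self_le_self[of "real (L n)"] L_le[of n] by (simp add: add.commute)
    moreover have "real (L n) * ln \<rho> \<le> real n * T * ln \<rho>"
      using L_le \<open>1 \<le> \<rho>\<close> by (intro mult_right_mono) auto
    moreover have "ln (real (A n)) + real n * T + real n * T * ln \<rho> + real n \<le> (a + \<epsilon>) * c n"
      using elim(2) by (simp add: algebra_simps)
    ultimately have "ln (real (L n + 1)) + ln (real (A n)) + real (L n) * ln \<rho> - (a + \<epsilon>) * c n
        \<le> - real n"
      by linarith
    moreover have "prob (U n) \<le> exp (ln (real (L n + 1)) + ln (real (A n)) + real (L n) * ln \<rho>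
        - (a + \<epsilon>) * c n)"
      using prob_some_S_greater[of "exp ((a + \<epsilon>) * c n)" n] A_pos[OF elim(1)] \<open>1 \<le> \<rho>\<close>
        exp_of_nat_mult[of "L n" "ln \<rho>"]
      by (simp add: U_def \<rho>_def exp_add exp_diff)
    ultimately show ?case
      by (smt (verit) exp_le_cancel_iff)
  qed
  then have "AE \<omega> in M. eventually (\<lambda>n. \<omega> \<notin> U n) sequentially"
    by (intro AE_eventually_notin_of_exp_bound) (simp add: U_def)
  with AE_space show ?thesis
    by eventually_elim (auto elim!: eventually_mono simp: U_def not_less)
qed

lemma AE_eventually_many_first_born_lines:
  assumes "0 < \<epsilon>" "\<epsilon> < a"
  shows "AE \<omega> in M. eventually (\<lambda>n. exp ((a - \<epsilon>) * c n)
    \<le> (\<Sum>i\<in>{1..A n}. indicator (first_born_line i (k n) (L n)) \<omega>)) sequentially"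
proof -
  define \<pi> where "\<pi> = measure_pmf.prob p {1..}"
  define q where "q n = \<pi> ^ L n" for n
  define D where "D n = {\<omega>\<in>space M.
    (\<Sum>i\<in>{1..A n}. indicator (first_born_line i (k n) (L n)) \<omega> :: real) < real (A n) * q n / 2}" for n
  have \<pi>: "0 < \<pi>" "\<pi> \<le> 1"
    using offspring_pos_prob_pos[OF mu_pos] by (simp_all add: \<pi>_def)
  have Aq: "real (A n) * q n = exp (ln (real (A n)) + real (L n) * ln \<pi>)" if "1 \<le> n" for n
    using A_pos[OF that] \<pi> exp_of_nat_mult[of "L n" "ln \<pi>"] by (simp add: q_def exp_add)
  have large: "eventually (\<lambda>n. real n + (a - \<epsilon>) * c n \<le> ln (real (A n)) + real (L n) * ln \<pi>) sequentially"
    using eventually_linear_le_ln_A[OF assms(1), of "1 - T * ln \<pi>"]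
  proof eventually_elim
    case (elim n)
    have "real n * T * ln \<pi> \<le> real (L n) * ln \<pi>"
      using L_le \<pi> by (intro mult_right_mono_neg) auto
    with elim show ?case
      by (simp add: algebra_simps)
  qed
  have "eventually (\<lambda>n. prob (D n) \<le> 4 * exp (- real n)) sequentially"
    using eventually_ge_at_top[of 1] large
  proof eventually_elim
    case (elim n)
    have "prob (D n) \<le> 4 / (real (A n) * q n)"
      using prob_sum_indicator_less_half_mean[of "{1..A n}" "\<lambda>i. first_born_line i (k n) (L n)"]
        A_pos[OF elim(1)] \<pi>
      by (simp add: D_def q_def \<pi>_def prob_first_born_line prob_first_born_line_Int_distinct)
    also have "\<dots> = 4 * exp (- (ln (real (A n)) + real (L n) * ln \<pi>))"
      unfolding Aq[OF elim(1)] exp_minus by (simp add: divide_inverse)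
    also have "\<dots> \<le> 4 * exp (- real n)"
    proof -
      have "0 \<le> (a - \<epsilon>) * c n"
        using assms c_pos[OF elim(1)] by simp
      then show ?thesis
        using elim(2) by simp
    qed
    finally show ?case .
  qed
  then have AE_D: "AE \<omega> in M. eventually (\<lambda>n. \<omega> \<notin> D n) sequentially"
    by (intro AE_eventually_notin_of_exp_bound) (simp add: D_def)
  have half_mean_large: "eventually (\<lambda>n. exp ((a - \<epsilon>) * c n) \<le> real (A n) * q n / 2) sequentially"
    using eventually_ge_at_top[of 1] large
  proof eventually_elim
    case (elim n)
    have "ln 2 \<le> (1::real)"
      using ln_le_minus_one[of 2] by simp
    with elim have "exp ((a - \<epsilon>) * c n) \<le> exp (ln (real (A n)) + real (L n) * ln \<pi> - ln 2)"
      by simp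
    then show ?case
      using Aq[OF elim(1)] by (simp add: exp_diff)
  qed
  show ?thesis
    using AE_D AE_space
  proof eventually_elim
    case (elim \<omega>)
    from elim(1) half_mean_large show ?case
      by eventually_elim (use elim(2) in \<open>auto simp: D_def\<close>)
  qed
qed

lemma AE_eventually_S_ge:
  assumes "0 < \<epsilon>" "\<epsilon> < a"
  shows "AE \<omega> in M. eventually (\<lambda>n. \<forall>m\<le>L n. exp ((a - \<epsilon>) * c n) \<le> real (S n m \<omega>)) sequentially"
  using AE_eventually_many_first_born_lines[OF assms]
proof (rule eventually_mono, elim eventually_mono, intro allI impI)
  fix \<omega> n m
  assume "exp ((a - \<epsilon>) * c n) \<le> (\<Sum>i\<in>{1..A n}. indicator (first_born_line i (k n) (L n)) \<omega>)"
    and "m \<le> L n"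
  moreover have "(\<Sum>i\<in>{1..A n}. indicator (first_born_line i (k n) (L n)) \<omega>) \<le> real (S n m \<omega>)"
    unfolding S_def of_nat_sum using gw_pos_of_first_born_line \<open>m \<le> L n\<close>
    by (intro sum_mono) (auto simp: indicator_def)
  ultimately show "exp ((a - \<epsilon>) * c n) \<le> real (S n m \<omega>)"
    by linarith
qed

lemma AE_eventually_abs_logplus_le:
  assumes "0 < \<epsilon>"
  shows "AE \<omega> in M. eventually
    (\<lambda>n. \<forall>m\<le>L n. \<bar>logplus (real (S n m \<omega>)) / c n - a\<bar> \<le> \<epsilon>) sequentially"
proof -
  define \<delta> where "\<delta> = min \<epsilon> (a / 2)"
  have \<delta>: "0 < \<delta>" "\<delta> < a" "\<delta> \<le> \<epsilon>"
    using assms a_pos by (auto simp: \<delta>_def)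
  show ?thesis
    using AE_eventually_S_le[OF \<delta>(1)] AE_eventually_S_ge[OF \<delta>(1,2)]
  proof eventually_elim
    case (elim \<omega>)
    from elim(1,2) eventually_ge_at_top[of 1] show ?case
    proof eventually_elim
      case (elim n)
      show ?case
      proof (intro allI impI)
        fix m
        assume "m \<le> L n"
        then have "\<bar>logplus (real (S n m \<omega>)) / c n - a\<bar> \<le> \<delta>"
          using elim by (intro abs_logplus_div_sub_le c_pos \<delta>(2)) auto
        with \<delta>(3) show "\<bar>logplus (real (S n m \<omega>)) / c n - a\<bar> \<le> \<epsilon>"
          by simp
      qed
    qed
  qed
qed

lemma AE_tendsto_SUP_abs_logplus:
  "AE \<omega> in M. (\<lambda>n. SUP t\<in>{0..T}.
      \<bar>logplus (real (S n (nat \<lfloor>real n * t\<rfloor>) \<omega>)) / c n - a\<bar>) \<longlonglongrightarrow> 0"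
proof -
  have "AE \<omega> in M. \<forall>\<epsilon>>0. eventually
      (\<lambda>n. \<forall>m\<le>L n. \<bar>logplus (real (S n m \<omega>)) / c n - a\<bar> \<le> \<epsilon>) sequentially"
    by (rule AE_all_pos[OF AE_eventually_abs_logplus_le]) (auto elim!: eventually_mono)
  then show ?thesis
  proof (rule eventually_mono, intro tendsto_SUP_zero)
    fix \<omega> n
    let ?g = "\<lambda>m. \<bar>logplus (real (S n m \<omega>)) / c n - a\<bar>"
    show "0 \<in> {0..T}"
      using T_pos by simp
    have "(\<lambda>t. ?g (nat \<lfloor>real n * t\<rfloor>)) ` {0..T} \<subseteq> ?g ` {..L n}"
      using nat_floor_le_L by auto
    then show "bdd_above ((\<lambda>t. ?g (nat \<lfloor>real n * t\<rfloor>)) ` {0..T})"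
      by (meson bdd_above_finite bdd_above_mono finite_atMost finite_imageI)
  next
    fix \<omega> and \<epsilon> :: real
    assume "\<forall>\<epsilon>>0. eventually
      (\<lambda>n. \<forall>m\<le>L n. \<bar>logplus (real (S n m \<omega>)) / c n - a\<bar> \<le> \<epsilon>) sequentially" "0 < \<epsilon>"
    then have "eventually
      (\<lambda>n. \<forall>m\<le>L n. \<bar>logplus (real (S n m \<omega>)) / c n - a\<bar> \<le> \<epsilon>) sequentially"
      by blast
    then show "eventually (\<lambda>n. \<forall>t\<in>{0..T}.
        \<bar>logplus (real (S n (nat \<lfloor>real n * t\<rfloor>) \<omega>)) / c n - a\<bar> \<le> \<epsilon>) sequentially"
      by (rule eventually_mono) (simp add: nat_floor_le_L)
  qed simp
qed

end

theorem lemma4: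
  fixes M :: "'a measure"
    and p :: "nat pmf" and \<mu> :: real
    and \<xi> :: "nat \<Rightarrow> nat \<Rightarrow> nat \<Rightarrow> nat \<Rightarrow> 'a \<Rightarrow> nat"
    and X :: "nat \<Rightarrow> nat \<Rightarrow> nat \<Rightarrow> 'a \<Rightarrow> nat"
    and c :: "nat \<Rightarrow> real" and A :: "nat \<Rightarrow> nat" and a :: real
    and T :: real and k :: "nat \<Rightarrow> nat"
  assumes "prob_space M"
    and indep: "prob_space.indep_vars M (\<lambda>_. count_space UNIV)
                  (\<lambda>(i, k, n, j). \<xi> i k n j) (UNIV :: (nat \<times> nat \<times> nat \<times> nat) set)"
    and distr: "\<And>i k n j. distr M (count_space UNIV) (\<xi> i k n j) = measure_pmf p"
    and mean_int: "integrable (measure_pmf p) real"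
    and mean: "measure_pmf.expectation p real = \<mu>"
    and mu_pos: "0 < \<mu>"
    and X_def: "X = gw \<xi>"
    and c_pos: "\<And>n. n \<ge> 1 \<Longrightarrow> c n > 0"
    and c_lim: "filterlim (\<lambda>n. c n / real n) at_top sequentially"
    and A_pos: "\<And>n. n \<ge> 1 \<Longrightarrow> A n \<ge> 1"
    and A_lim: "(\<lambda>n. ln (real (A n)) / c n) \<longlonglongrightarrow> a"
    and a_pos: "a > 0"
    and T_pos: "T > 0"
  shows "AE \<omega> in M. (\<lambda>n. SUP t\<in>{0..T}.
            \<bar>logplus (real (\<Sum>i=1..A n. X i (k n) (nat \<lfloor>real n * t\<rfloor>) \<omega>)) / c n - a\<bar>)
          \<longlonglongrightarrow> 0"
proof -
  interpret galton_watson_growth M p \<mu> \<xi> c A a T k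
    by (intro galton_watson_growth.intro galton_watson_family.intro
        galton_watson_family_axioms.intro galton_watson_growth_axioms.intro)
      (fact assms)+
  have "(\<Sum>i=1..A n. X i (k n) m \<omega>) = S n m \<omega>" for n m \<omega>
    by (simp add: S_def X_def)
  then show ?thesis
    using AE_tendsto_SUP_abs_logplus by simp
qed

end
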